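(* For all closed terms $t_0,t_1$ of $\lambda_S$, if $t_0\approx^p_{\emptyset}t_1$ then $t_0\equiv_p t_1$.
   Context: Terms of $\lambda_S$: $t ::= x \mid \lambda x.t \mid t\,t \mid \mathcal{S}k.t \mid \langle t\rangle$ (shift binds $k$; $\langle\cdot\rangle$ is reset), up to $\alpha$-conversion. Values $v::=\lambda x.t$. Pure contexts $E ::= \Box \mid v\,E \mid E\,t$; evaluation contexts $F ::= \Box \mid v\,F \mid F\,t \mid \langle F\rangle$; contexts $C ::= \Box \mid \lambda x.C \mid t\,C \mid C\,t \mid \mathcal{S}k.C \mid \langle C\rangle$. Reduction: $F[(\lambda x.t)v]\to F[t\{v/x\}]$; $F[\langle E[\mathcal Sk.t]\rangle]\to F[\langle t\{\lambda x.\langle E[x]\rangle/k\}\rangle]$ ($x\notin\mathrm{fv}(E)$); $F[\langle v\rangle]\to F[v]$; $\to^*$ reflexive-transitive closure; $t\Downarrow t'$ iff $t\to^*t'$ and $t'$ irreducible. A program is a term of the form $\langle t\rangle$ (ranged over by $p$). Closures: for $R$ a relation on closed terms, $\widetilde R$ is the smallest relation containing $R$, all $(x,x)$, closed under all term constructors, restricted to closed terms; $\widehat R$ is the smallest relation on closed evaluation contexts with $\Box\widehat R\Box$, $v_0F_0\widehat Rv_1F_1$ if $F_0\widehat RF_1,v_0\widetilde Rv_1$; $F_0t_0\widehat RF_1t_1$ if $F_0\widehat RF_1,t_0\widetilde Rt_1$; $\langle F_0\rangle\widehat R\langle F_1\rangle$ if $F_0\widehat RF_1$. Environmental bisimilarity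 for programs: here an environment $\mathcal E$ is a relation on closed values; an environmental relation $\mathcal X$ is a set of environments and triples $(\mathcal E,t_0,t_1)$ with $t_0,t_1$ closed, written $t_0\mathcal X_{\mathcal E}t_1$. $\mathcal X$ is an environmental bisimulation for programs if (1) if $t_0\mathcal X_{\mathcal E}t_1$ and $t_0,t_1$ are not both programs, then for all pure contexts $E_0\widehat{\mathcal E}E_1$, $\langle E_0[t_0]\rangle\mathcal X_{\mathcal E}\langle E_1[t_1]\rangle$; (2) if $p_0\mathcal X_{\mathcal E}p_1$ (programs): (a) if $p_0\to p_0'$ with $p_0'$ a program, then $p_1\to^*p_1'$ with $p_1'$ a program and $p_0'\mathcal X_{\mathcal E}p_1'$; (b) if $p_0\to v_0$ then $p_1\to^*v_1$, a value, and $\{(v_0,v_1)\}\cup\mathcal E\in\mathcal X$; (c) symmetric conditions for $p_1$; (3) for all $\mathcal E\in\mathcal X$, if $(\lambda x.t_0)\mathcal E(\lambda x.t_1)$ and $v_0\widetilde{\mathcal E}v_1$ then $t_0\{v_0/x\}\mathcal X_{\mathcal E}t_1\{v_1/x\}$. $\approx^p$ is the largest such relation, $t_0\approx^p_{\mathcal E}t_1$ meaning $(\mathcal E,t_0,t_1)\in\approx^p$. Contextual equivalence for programs: $t_0\equiv_pt_1$ iff for every context $C$ with $\langle C[t_0]\rangle,\langle C[t_1]\rangle$ closed, $\langle C[t_0]\rangle\Downarrow$ a value iff $\langle C[t_1]\rangle\Downarrow$ a value. *)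

theory Defs
  imports Main
begin

section \<open>Syntax of lambda_S (de Bruijn indices, so alpha-equivalence is syntactic equality)\<close>

text \<open>Lam t binds index 0 in t; Shift t (i.e. S k. t) binds k as index 0 in t; Reset t is the delimiter.\<close>
datatype trm = Var nat | Lam trm | App trm trm | Shift trm | Reset trm

fun lift :: "nat \<Rightarrow> trm \<Rightarrow> trm" where
  "lift k (Var i) = (if i < k then Var i else Var (Suc i))"
| "lift k (Lam t) = Lam (lift (Suc k) t)"
| "lift k (App t u) = App (lift k t) (lift k u)"
| "lift k (Shift t) = Shift (lift (Suc k) t)"
| "lift k (Reset t) = Reset (lift k t)"

fun subst :: "nat \<Rightarrow> trm \<Rightarrow> trm \<Rightarrow> trm" where
  "subst k s (Var i) = (if i < k then Var i else if i = k then s else Var (i - 1))"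
| "subst k s (Lam t) = Lam (subst (Suc k) (lift 0 s) t)"
| "subst k s (App t u) = App (subst k s t) (subst k s u)"
| "subst k s (Shift t) = Shift (subst (Suc k) (lift 0 s) t)"
| "subst k s (Reset t) = Reset (subst k s t)"

fun closed_at :: "nat \<Rightarrow> trm \<Rightarrow> bool" where
  "closed_at n (Var i) = (i < n)"
| "closed_at n (Lam t) = closed_at (Suc n) t"
| "closed_at n (App t u) = (closed_at n t \<and> closed_at n u)"
| "closed_at n (Shift t) = closed_at (Suc n) t"
| "closed_at n (Reset t) = closed_at n t"

definition closed :: "trm \<Rightarrow> bool" where
  "closed t = closed_at 0 t"

definition is_val :: "trm \<Rightarrow> bool" where
  "is_val t = (\<exists>b. t = Lam b)"

definition is_prog :: "trm \<Rightarrow> bool" where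
  "is_prog t = (\<exists>u. t = Reset u)"

datatype ectx = EHole | EAppR trm ectx | EAppL ectx trm | EReset ectx

fun efill :: "ectx \<Rightarrow> trm \<Rightarrow> trm" where
  "efill EHole t = t"
| "efill (EAppR v F) t = App v (efill F t)"
| "efill (EAppL F u) t = App (efill F t) u"
| "efill (EReset F) t = Reset (efill F t)"

fun evctx :: "ectx \<Rightarrow> bool" where
  "evctx EHole = True"
| "evctx (EAppR v F) = (is_val v \<and> evctx F)"
| "evctx (EAppL F u) = evctx F"
| "evctx (EReset F) = evctx F"

fun pure :: "ectx \<Rightarrow> bool" where
  "pure EHole = True"
| "pure (EAppR v F) = (is_val v \<and> pure F)"
| "pure (EAppL F u) = pure F"
| "pure (EReset F) = False"

fun elift :: "nat \<Rightarrow> ectx \<Rightarrow> ectx" where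
  "elift k EHole = EHole"
| "elift k (EAppR v F) = EAppR (lift k v) (elift k F)"
| "elift k (EAppL F u) = EAppL (elift k F) (lift k u)"
| "elift k (EReset F) = EReset (elift k F)"

datatype ctx = Hole | CLam ctx | CAppR trm ctx | CAppL ctx trm | CShift ctx | CReset ctx

fun cfill :: "ctx \<Rightarrow> trm \<Rightarrow> trm" where
  "cfill Hole t = t"
| "cfill (CLam C) t = Lam (cfill C t)"
| "cfill (CAppR u C) t = App u (cfill C t)"
| "cfill (CAppL C u) t = App (cfill C t) u"
| "cfill (CShift C) t = Shift (cfill C t)"
| "cfill (CReset C) t = Reset (cfill C t)"

inductive step :: "trm \<Rightarrow> trm \<Rightarrow> bool" where
  beta: "evctx F \<Longrightarrow> is_val v \<Longrightarrow>
     step (efill F (App (Lam t) v)) (efill F (subst 0 v t))"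
| shift: "evctx F \<Longrightarrow> pure E \<Longrightarrow>
     step (efill F (Reset (efill E (Shift t))))
          (efill F (Reset (subst 0 (Lam (Reset (efill (elift 0 E) (Var 0)))) t)))"
| reset: "evctx F \<Longrightarrow> is_val v \<Longrightarrow>
     step (efill F (Reset v)) (efill F v)"

abbreviation steps :: "trm \<Rightarrow> trm \<Rightarrow> bool" where
  "steps \<equiv> step\<^sup>*\<^sup>*"

definition irreducible :: "trm \<Rightarrow> bool" where
  "irreducible t = (\<not> (\<exists>u. step t u))"

definition eval_to_val :: "trm \<Rightarrow> bool" where
  "eval_to_val t = (\<exists>t'. steps t t' \<and> irreducible t' \<and> is_val t')"

inductive_set tilde_raw :: "(trm \<times> trm) set \<Rightarrow> (trm \<times> trm) set" for R where
  base: "p \<in> R \<Longrightarrow> p \<in> tilde_raw R"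
| var: "(Var i, Var i) \<in> tilde_raw R"
| lam: "(a, b) \<in> tilde_raw R \<Longrightarrow> (Lam a, Lam b) \<in> tilde_raw R"
| app: "(a, b) \<in> tilde_raw R \<Longrightarrow> (c, d) \<in> tilde_raw R \<Longrightarrow> (App a c, App b d) \<in> tilde_raw R"
| shft: "(a, b) \<in> tilde_raw R \<Longrightarrow> (Shift a, Shift b) \<in> tilde_raw R"
| rst: "(a, b) \<in> tilde_raw R \<Longrightarrow> (Reset a, Reset b) \<in> tilde_raw R"

definition tilde :: "(trm \<times> trm) set \<Rightarrow> (trm \<times> trm) set" where
  "tilde R = {(a, b). (a, b) \<in> tilde_raw R \<and> closed a \<and> closed b}"

inductive_set hat :: "(trm \<times> trm) set \<Rightarrow> (ectx \<times> ectx) set" for R where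
  hole: "(EHole, EHole) \<in> hat R"
| appR: "(F0, F1) \<in> hat R \<Longrightarrow> is_val v0 \<Longrightarrow> is_val v1 \<Longrightarrow> (v0, v1) \<in> tilde R \<Longrightarrow>
          (EAppR v0 F0, EAppR v1 F1) \<in> hat R"
| appL: "(F0, F1) \<in> hat R \<Longrightarrow> (t0, t1) \<in> tilde R \<Longrightarrow>
          (EAppL F0 t0, EAppL F1 t1) \<in> hat R"
| rst: "(F0, F1) \<in> hat R \<Longrightarrow> (EReset F0, EReset F1) \<in> hat R"

type_synonym env = "(trm \<times> trm) set"
type_synonym envrel = "env set \<times> (env \<times> trm \<times> trm) set"

definition env_ok :: "env \<Rightarrow> bool" where
  "env_ok E = (\<forall>(a, b) \<in> E. closed a \<and> closed b \<and> is_val a \<and> is_val b)"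

definition envrel_ok :: "envrel \<Rightarrow> bool" where
  "envrel_ok X = ((\<forall>E \<in> fst X. env_ok E) \<and>
     (\<forall>(E, t0, t1) \<in> snd X. env_ok E \<and> closed t0 \<and> closed t1))"

definition env_bisim_p :: "envrel \<Rightarrow> bool" where
  "env_bisim_p X = (envrel_ok X \<and>
    \<comment> \<open>(1)\<close>
    (\<forall>E t0 t1. (E, t0, t1) \<in> snd X \<longrightarrow> \<not> (is_prog t0 \<and> is_prog t1) \<longrightarrow>
       (\<forall>E0 E1. pure E0 \<longrightarrow> pure E1 \<longrightarrow> (E0, E1) \<in> hat E \<longrightarrow>
          (E, Reset (efill E0 t0), Reset (efill E1 t1)) \<in> snd X)) \<and>
    \<comment> \<open>(2)\<close>
    (\<forall>E p0 p1. (E, p0, p1) \<in> snd X \<longrightarrow> is_prog p0 \<longrightarrow> is_prog p1 \<longrightarrow>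
       \<comment> \<open>(a)\<close>
       (\<forall>p0'. step p0 p0' \<longrightarrow> is_prog p0' \<longrightarrow>
          (\<exists>p1'. steps p1 p1' \<and> is_prog p1' \<and> (E, p0', p1') \<in> snd X)) \<and>
       \<comment> \<open>(b)\<close>
       (\<forall>v0. step p0 v0 \<longrightarrow> is_val v0 \<longrightarrow>
          (\<exists>v1. steps p1 v1 \<and> is_val v1 \<and> insert (v0, v1) E \<in> fst X)) \<and>
       \<comment> \<open>(c) symmetric\<close>
       (\<forall>p1'. step p1 p1' \<longrightarrow> is_prog p1' \<longrightarrow>
          (\<exists>p0'. steps p0 p0' \<and> is_prog p0' \<and> (E, p0', p1') \<in> snd X)) \<and>
       (\<forall>v1. step p1 v1 \<longrightarrow> is_val v1 \<longrightarrow>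
          (\<exists>v0. steps p0 v0 \<and> is_val v0 \<and> insert (v0, v1) E \<in> fst X))) \<and>
    \<comment> \<open>(3)\<close>
    (\<forall>E \<in> fst X. \<forall>b0 b1 v0 v1. (Lam b0, Lam b1) \<in> E \<longrightarrow>
       is_val v0 \<longrightarrow> is_val v1 \<longrightarrow> (v0, v1) \<in> tilde E \<longrightarrow>
       (E, subst 0 v0 b0, subst 0 v1 b1) \<in> snd X))"

definition env_bisimilar_p :: "env \<Rightarrow> trm \<Rightarrow> trm \<Rightarrow> bool" where
  "env_bisimilar_p E t0 t1 = (\<exists>X. env_bisim_p X \<and> (E, t0, t1) \<in> snd X)"

definition ctx_equiv_p :: "trm \<Rightarrow> trm \<Rightarrow> bool" where
  "ctx_equiv_p t0 t1 = (\<forall>C. closed (Reset (cfill C t0)) \<longrightarrow> closed (Reset (cfill C t1)) \<longrightarrow>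
     (eval_to_val (Reset (cfill C t0)) \<longleftrightarrow> eval_to_val (Reset (cfill C t1))))"

end

theory Submission
  imports Defs
begin

text \<open>
  The proof goes through CIU approximation: \<open>\<langle>F[t0]\<rangle>\<close> evaluating to a value implies the
  same for \<open>\<langle>F[t1]\<rangle>\<close>, for every closed evaluation context F.

  CIU approximation implies contextual approximation. The context closure of the single pair
  (t0, t1) is a simulation up to leaves: a step on the left is matched on the right unless an
  occurrence of t0 reaches evaluation position. Then the right-hand side is \<open>F1[t1]\<close> while
  \<open>F1[t0]\<close> is related to the left-hand side with one leaf less, so an induction on the number
  of leaves, nested in an induction on the length of the reduction, shows that \<open>\<langle>F1[t0]\<rangle>\<close>
  and hence, by CIU approximation, \<open>\<langle>F1[t1]\<rangle>\<close> evaluates.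

  An environmental bisimulation yields CIU approximation. Along the reduction of \<open>\<langle>F[t0]\<rangle>\<close>
  the two sides are either related programs of the bisimulation in related evaluation contexts,
  which clauses (1) and (2) keep in step, or terms in the context closure of an environment.
  There all leaves are values, so the simulation can only be blocked by a leaf applied to an
  argument, which clause (3) turns back into a related pair of programs. The converse of a
  bisimulation is one, which gives the other direction.
\<close>

section \<open>Closed terms, contexts and reduction\<close>

lemma lift_closed_at: "closed_at n t \<Longrightarrow> n \<le> k \<Longrightarrow> lift k t = t"
  by (induction t arbitrary: n k) auto

lemma subst_closed_at: "closed_at n t \<Longrightarrow> n \<le> k \<Longrightarrow> subst k s t = t"
  by (induction t arbitrary: n k s) auto

lemma closed_at_lift: "closed_at n t \<Longrightarrow> closed_at (Suc n) (lift k t)"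
  by (induction t arbitrary: n k) auto

lemma closed_at_subst:
  "closed_at (Suc n) t \<Longrightarrow> closed_at n s \<Longrightarrow> k \<le> n \<Longrightarrow> closed_at n (subst k s t)"
  by (induction t arbitrary: n k s) (auto simp: closed_at_lift)

fun closed_ectx :: "nat \<Rightarrow> ectx \<Rightarrow> bool" where
  "closed_ectx n EHole = True"
| "closed_ectx n (EAppR v F) = (closed_at n v \<and> closed_ectx n F)"
| "closed_ectx n (EAppL F u) = (closed_ectx n F \<and> closed_at n u)"
| "closed_ectx n (EReset F) = closed_ectx n F"

lemma closed_at_efill: "closed_at n (efill F t) = (closed_ectx n F \<and> closed_at n t)"
  by (induction F) auto

lemma closed_ectx_elift: "closed_ectx n F \<Longrightarrow> closed_ectx (Suc n) (elift k F)"
  by (induction F) (auto simp: closed_at_lift)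

fun ecomp :: "ectx \<Rightarrow> ectx \<Rightarrow> ectx" where
  "ecomp EHole K = K"
| "ecomp (EAppR v F) K = EAppR v (ecomp F K)"
| "ecomp (EAppL F u) K = EAppL (ecomp F K) u"
| "ecomp (EReset F) K = EReset (ecomp F K)"

lemma efill_ecomp [simp]: "efill (ecomp G F) t = efill G (efill F t)"
  by (induction G) auto

lemma evctx_ecomp: "evctx G \<Longrightarrow> evctx F \<Longrightarrow> evctx (ecomp G F)"
  by (induction G) auto

lemma efill_eq_Lam: "efill G t = Lam b \<Longrightarrow> G = EHole \<and> t = Lam b"
  by (cases G) auto

lemma efill_Reset_not_val: "\<not> is_val (efill G (Reset u))"
  by (cases G) (auto simp: is_val_def)

text \<open>The continuation \<open>\<lambda>x. \<langle>E[x]\<rangle>\<close> captured by a shift out of E.\<close>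

abbreviation cont :: "ectx \<Rightarrow> trm" where
  "cont E \<equiv> Lam (Reset (efill (elift 0 E) (Var 0)))"

inductive sstep :: "trm \<Rightarrow> trm \<Rightarrow> bool" where
  beta: "is_val v \<Longrightarrow> sstep (App (Lam t) v) (subst 0 v t)"
| shift: "pure E \<Longrightarrow> sstep (Reset (efill E (Shift t))) (Reset (subst 0 (cont E) t))"
| reset: "is_val v \<Longrightarrow> sstep (Reset v) v"
| appL: "sstep a a' \<Longrightarrow> sstep (App a b) (App a' b)"
| appR: "is_val a \<Longrightarrow> sstep b b' \<Longrightarrow> sstep (App a b) (App a b')"
| resetI: "sstep a a' \<Longrightarrow> sstep (Reset a) (Reset a')"

lemma sstep_efill: "evctx G \<Longrightarrow> sstep a b \<Longrightarrow> sstep (efill G a) (efill G b)"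
  by (induction G) (auto intro: sstep.intros)

lemma step_efill: "step a b \<Longrightarrow> evctx G \<Longrightarrow> step (efill G a) (efill G b)"
proof (induction rule: step.induct)
  case (beta F v t)
  then show ?case using step.beta[of "ecomp G F" v t] by (simp add: evctx_ecomp)
next
  case (shift F E t)
  then show ?case using step.shift[of "ecomp G F" E t] by (simp add: evctx_ecomp)
next
  case (reset F v)
  then show ?case using step.reset[of "ecomp G F" v] by (simp add: evctx_ecomp)
qed

lemma step_eq_sstep: "step = sstep"
proof (intro ext iffI)
  show "step a b \<Longrightarrow> sstep a b" for a b
    by (induction rule: step.induct) (auto intro: sstep_efill sstep.intros)
  show "sstep a b \<Longrightarrow> step a b" for a b
  proof (induction rule: sstep.induct)
    case (beta v t) then show ?case using step.beta[of EHole v t] by simp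
  next
    case (shift E t) then show ?case using step.shift[of EHole E t] by simp
  next
    case (reset v) then show ?case using step.reset[of EHole v] by simp
  next
    case (appL a a' b) then show ?case using step_efill[of a a' "EAppL EHole b"] by simp
  next
    case (appR a b b') then show ?case using step_efill[of b b' "EAppR a EHole"] by simp
  next
    case (resetI a a') then show ?case using step_efill[of a a' "EReset EHole"] by simp
  qed
qed

inductive_cases sstep_ResetE: "sstep (Reset a) y"
inductive_cases sstep_AppE: "sstep (App a b) y"

lemma val_no_sstep: "is_val v \<Longrightarrow> \<not> sstep v y"
  by (auto simp: is_val_def elim: sstep.cases)

lemma sstep_closed_at: "sstep a b \<Longrightarrow> closed_at n a \<Longrightarrow> closed_at n b"
proof (induction arbitrary: n rule: sstep.induct)
  case (beta v t)
  then show ?case by (auto intro: closed_at_subst)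
next
  case (shift E t)
  then have "closed_ectx n E" "closed_at (Suc n) t" by (auto simp: closed_at_efill)
  then show ?case by (auto intro: closed_at_subst simp: closed_at_efill closed_ectx_elift)
qed auto

lemma sstep_closed: "sstep a b \<Longrightarrow> closed a \<Longrightarrow> closed b"
  unfolding closed_def by (rule sstep_closed_at)

lemma sstep_prog: "sstep a b \<Longrightarrow> is_prog a \<Longrightarrow> is_prog b \<or> is_val b"
  by (auto simp: is_prog_def elim: sstep_ResetE)

lemma sstep_ResetD:
  assumes "sstep (Reset u) y"
  obtains (shift) E t where "pure E" "u = efill E (Shift t)" "y = Reset (subst 0 (cont E) t)"
  | (reset) "is_val u" "y = u"
  | (inner) u' where "sstep u u'" "y = Reset u'"
  using assms by (auto elim: sstep_ResetE)

lemma steps_efill: "steps a b \<Longrightarrow> evctx G \<Longrightarrow> steps (efill G a) (efill G b)"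
  by (induction rule: rtranclp_induct) (auto intro: rtranclp.rtrancl_into_rtrancl step_efill)

lemma eval_to_val_steps: "steps a b \<Longrightarrow> eval_to_val b \<Longrightarrow> eval_to_val a"
  unfolding eval_to_val_def by (meson rtranclp_trans)

lemma eval_to_val_sstep: "sstep a b \<Longrightarrow> eval_to_val b \<Longrightarrow> eval_to_val a"
  using eval_to_val_steps[of a b] by (simp add: step_eq_sstep r_into_rtranclp)

lemma eval_to_val_val: "is_val v \<Longrightarrow> eval_to_val v"
  unfolding eval_to_val_def irreducible_def step_eq_sstep using val_no_sstep by blast

lemma eval_to_val_Reset_val: "is_val v \<Longrightarrow> eval_to_val (Reset v)"
  by (meson eval_to_val_sstep eval_to_val_val sstep.reset)

section \<open>The context closure with counted leaves\<close>

text \<open>\<open>ctx_cl P k a b\<close>: a and b agree up to k leaves, each a pair in P. Forgetting k gives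
  tilde_raw P; the count is the measure of the inner induction in the CIU argument.\<close>

inductive ctx_cl :: "(trm \<times> trm) set \<Rightarrow> nat \<Rightarrow> trm \<Rightarrow> trm \<Rightarrow> bool" for P where
  leaf: "(a, b) \<in> P \<Longrightarrow> ctx_cl P (Suc 0) a b"
| Var: "ctx_cl P 0 (Var i) (Var i)"
| Lam: "ctx_cl P k a b \<Longrightarrow> ctx_cl P k (Lam a) (Lam b)"
| App: "ctx_cl P k a b \<Longrightarrow> ctx_cl P m c d \<Longrightarrow> ctx_cl P (k + m) (App a c) (App b d)"
| Shift: "ctx_cl P k a b \<Longrightarrow> ctx_cl P k (Shift a) (Shift b)"
| Reset: "ctx_cl P k a b \<Longrightarrow> ctx_cl P k (Reset a) (Reset b)"

inductive ectx_cl :: "(trm \<times> trm) set \<Rightarrow> nat \<Rightarrow> ectx \<Rightarrow> ectx \<Rightarrow> bool" for P where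
  EHole: "ectx_cl P 0 EHole EHole"
| EAppR: "ctx_cl P k v w \<Longrightarrow> is_val v \<Longrightarrow> is_val w \<Longrightarrow> ectx_cl P m F G \<Longrightarrow>
    ectx_cl P (k + m) (EAppR v F) (EAppR w G)"
| EAppL: "ectx_cl P m F G \<Longrightarrow> ctx_cl P k u w \<Longrightarrow> ectx_cl P (m + k) (EAppL F u) (EAppL G w)"
| EReset: "ectx_cl P m F G \<Longrightarrow> ectx_cl P m (EReset F) (EReset G)"

inductive_cases ctx_cl_AppE [consumes 1, case_names leaf App]: "ctx_cl P k (App a b) y"
inductive_cases ctx_cl_LamE [consumes 1, case_names leaf Lam]: "ctx_cl P k (Lam a) y"
inductive_cases ctx_cl_ResetE [consumes 1, case_names leaf Reset]: "ctx_cl P k (Reset a) y"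
inductive_cases ctx_cl_ShiftE [consumes 1, case_names leaf Shift]: "ctx_cl P k (Shift a) y"

definition closed_rel :: "(trm \<times> trm) set \<Rightarrow> bool" where
  "closed_rel P = (\<forall>(a, b) \<in> P. closed a \<and> closed b)"

lemma ctx_cl_refl: "ctx_cl P 0 a a"
proof (induction a)
  case (App a1 a2) then show ?case using ctx_cl.App[of P 0 a1 a1 0 a2 a2] by simp
qed (auto intro: ctx_cl.intros)

lemma ectx_cl_refl: "evctx G \<Longrightarrow> ectx_cl P 0 G G"
proof (induction G)
  case (EAppR v F) then show ?case using ectx_cl.EAppR[of P 0 v v 0 F F] ctx_cl_refl by auto
next
  case (EAppL F u) then show ?case using ectx_cl.EAppL[of P 0 F F 0 u u] ctx_cl_refl by auto
qed (auto intro: ectx_cl.intros)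

lemma ctx_cl_Lam_cases: "ctx_cl P k (Lam b) d \<Longrightarrow> is_val d \<or> ((Lam b, d) \<in> P \<and> k = Suc 0)"
  by (erule ctx_cl_LamE) (auto simp: is_val_def)

lemma ctx_cl_lift: "ctx_cl P k a b \<Longrightarrow> closed_rel P \<Longrightarrow> ctx_cl P k (lift i a) (lift i b)"
proof (induction arbitrary: i rule: ctx_cl.induct)
  case (leaf a b)
  then have "closed_at 0 a" "closed_at 0 b" by (auto simp: closed_rel_def closed_def)
  then show ?case using leaf lift_closed_at[of 0 _ i] by (auto intro: ctx_cl.leaf)
qed (auto intro: ctx_cl.intros)

lemma ctx_cl_subst:
  "ctx_cl P k a b \<Longrightarrow> ctx_cl P m c d \<Longrightarrow> closed_rel P \<Longrightarrow> \<exists>j. ctx_cl P j (subst i c a) (subst i d b)"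
proof (induction arbitrary: i c d m rule: ctx_cl.induct)
  case (leaf a b)
  then have "closed_at 0 a" "closed_at 0 b" by (auto simp: closed_rel_def closed_def)
  then show ?case using leaf subst_closed_at[of 0 _ i] by (auto intro: ctx_cl.leaf)
next
  case (Lam k a b)
  then show ?case by (metis ctx_cl.Lam ctx_cl_lift subst.simps(2))
next
  case (App k a b m' c' d')
  then show ?case by (metis ctx_cl.App subst.simps(3))
next
  case (Shift k a b)
  then show ?case by (metis ctx_cl.Shift ctx_cl_lift subst.simps(4))
next
  case (Reset k a b)
  then show ?case by (metis ctx_cl.Reset subst.simps(5))
qed (auto intro: ctx_cl.intros)

lemma ctx_cl_efill:
  "ectx_cl P k F G \<Longrightarrow> ctx_cl P m a b \<Longrightarrow> ctx_cl P (k + m) (efill F a) (efill G b)"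
proof (induction arbitrary: m a b rule: ectx_cl.induct)
  case (EAppR k v w m' F G)
  then show ?case using ctx_cl.App[of P k v w "m' + m"] by (simp add: add.assoc)
next
  case (EAppL m' F G k u w)
  then have "ctx_cl P (m' + m + k) (App (efill F a) u) (App (efill G b) w)"
    by (blast intro: ctx_cl.App)
  then show ?case by (simp add: add_ac)
qed (auto intro: ctx_cl.intros)

lemma ectx_cl_evctx: "ectx_cl P k F G \<Longrightarrow> evctx F \<and> evctx G"
  by (induction rule: ectx_cl.induct) auto

lemma ectx_cl_ecomp:
  "ectx_cl P k G0 G1 \<Longrightarrow> ectx_cl P m F0 F1 \<Longrightarrow> ectx_cl P (k + m) (ecomp G0 F0) (ecomp G1 F1)"
proof (induction rule: ectx_cl.induct)
  case (EAppR k v w m' F G)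
  then show ?case using ectx_cl.EAppR[of P k v w "m' + m"] by (simp add: add.assoc)
next
  case (EAppL m' F G k u w)
  then show ?case using ectx_cl.EAppL[of P "m' + m" _ _ k u w] by (simp add: add_ac)
qed (auto intro: ectx_cl.intros)

lemma ectx_cl_elift: "ectx_cl P k F G \<Longrightarrow> closed_rel P \<Longrightarrow> ectx_cl P k (elift i F) (elift i G)"
  by (induction rule: ectx_cl.induct)
    (auto intro!: ectx_cl.intros ctx_cl_lift simp: is_val_def)

lemma ctx_cl_cont: "ectx_cl P k E E1 \<Longrightarrow> closed_rel P \<Longrightarrow> ctx_cl P k (cont E) (cont E1)"
  using ctx_cl_efill[OF ectx_cl_elift ctx_cl.Var, of P k E E1 0 0]
  by (auto intro: ctx_cl.Lam ctx_cl.Reset)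

lemma ctx_cl_cfill: "(a, b) \<in> P \<Longrightarrow> \<exists>k. ctx_cl P k (cfill C a) (cfill C b)"
  by (induction C) (auto intro: ctx_cl.intros ctx_cl_refl)

lemma ctx_cl_tilde_raw: "ctx_cl P k a b \<Longrightarrow> (a, b) \<in> tilde_raw P"
  by (induction rule: ctx_cl.induct) (auto intro: tilde_raw.intros)

lemma tilde_raw_ctx_cl: "(a, b) \<in> tilde_raw P \<Longrightarrow> \<exists>k. ctx_cl P k a b"
  by (induction rule: tilde_raw.induct[split_format(complete)]) (auto intro: ctx_cl.intros)

lemma ctx_cl_mono: "ctx_cl P k a b \<Longrightarrow> P \<subseteq> Q \<Longrightarrow> ctx_cl Q k a b"
  by (induction rule: ctx_cl.induct) (auto intro: ctx_cl.intros)

lemma ectx_cl_mono: "ectx_cl P k F G \<Longrightarrow> P \<subseteq> Q \<Longrightarrow> ectx_cl Q k F G"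
  by (induction rule: ectx_cl.induct) (auto intro: ectx_cl.intros ctx_cl_mono)

section \<open>The context closure simulates reduction up to leaves\<close>

text \<open>The leaf (p0, p1) sits in evaluation position on both sides, and replacing p1 by p0 on the
  right leaves fewer than k leaves.\<close>

definition exposes_leaf :: "(trm \<times> trm) set \<Rightarrow> nat \<Rightarrow> trm \<Rightarrow> trm \<Rightarrow> trm \<Rightarrow> trm \<Rightarrow> bool" where
  "exposes_leaf P k p0 p1 a0 a1 = (\<exists>F0 F1 m. a0 = efill F0 p0 \<and> a1 = efill F1 p1 \<and>
     evctx F0 \<and> evctx F1 \<and> ctx_cl P m (efill F0 p0) (efill F1 p0) \<and> m < k)"

definition exposes_nonval_leaf :: "(trm \<times> trm) set \<Rightarrow> nat \<Rightarrow> trm \<Rightarrow> trm \<Rightarrow> bool" where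
  "exposes_nonval_leaf P k a0 a1 =
     (\<exists>p0 p1. (p0, p1) \<in> P \<and> \<not> (is_val p0 \<and> is_val p1) \<and> exposes_leaf P k p0 p1 a0 a1)"

definition applies_leaf :: "(trm \<times> trm) set \<Rightarrow> nat \<Rightarrow> trm \<Rightarrow> trm \<Rightarrow> trm \<Rightarrow> bool" where
  "applies_leaf P k a0 a1 a0' = (\<exists>G0 G1 b0 b1 w0 w1 kG kw. (Lam b0, Lam b1) \<in> P \<and>
     a0 = efill G0 (App (Lam b0) w0) \<and> a1 = efill G1 (App (Lam b1) w1) \<and>
     a0' = efill G0 (subst 0 w0 b0) \<and> ectx_cl P kG G0 G1 \<and> ctx_cl P kw w0 w1 \<and>
     is_val w0 \<and> is_val w1 \<and> kG + kw < k)"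

text \<open>A step from a0 to a0' is matched by a1, or it is blocked at a leaf: one that is not a pair of
  values, or a pair of abstractions applied to arguments.\<close>

definition simulated :: "(trm \<times> trm) set \<Rightarrow> nat \<Rightarrow> trm \<Rightarrow> trm \<Rightarrow> trm \<Rightarrow> bool" where
  "simulated P k a0 a1 a0' =
     ((\<exists>a1' j. sstep a1 a1' \<and> ctx_cl P j a0' a1') \<or> exposes_nonval_leaf P k a0 a1 \<or>
      applies_leaf P k a0 a1 a0')"

lemma exposes_leaf_refl: "exposes_leaf P (Suc 0) p0 p1 p0 p1"
  unfolding exposes_leaf_def using ctx_cl_refl by (metis efill.simps(1) evctx.simps(1) lessI)

lemma exposes_leaf_mono: "exposes_leaf P k p0 p1 a0 a1 \<Longrightarrow> k \<le> k' \<Longrightarrow> exposes_leaf P k' p0 p1 a0 a1"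
  unfolding exposes_leaf_def using order_less_le_trans by blast

lemma exposes_leaf_efill:
  assumes "exposes_leaf P k p0 p1 a0 a1" and H: "ectx_cl P kH H0 H1"
  shows "exposes_leaf P (kH + k) p0 p1 (efill H0 a0) (efill H1 a1)"
proof -
  obtain F0 F1 m where F: "a0 = efill F0 p0" "a1 = efill F1 p1" "evctx F0" "evctx F1"
    "ctx_cl P m (efill F0 p0) (efill F1 p0)" "m < k"
    using assms(1) unfolding exposes_leaf_def by blast
  have "ctx_cl P (kH + m) (efill (ecomp H0 F0) p0) (efill (ecomp H1 F1) p0)"
    using ctx_cl_efill[OF H F(5)] by simp
  moreover have "evctx (ecomp H0 F0)" "evctx (ecomp H1 F1)"
    using ectx_cl_evctx[OF H] F(3,4) by (auto intro: evctx_ecomp)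
  ultimately show ?thesis
    unfolding exposes_leaf_def using F by (metis add_less_cancel_left efill_ecomp)
qed

lemma exposes_nonval_leaf_efill:
  "exposes_nonval_leaf P k a0 a1 \<Longrightarrow> ectx_cl P kH H0 H1 \<Longrightarrow>
    exposes_nonval_leaf P (kH + k) (efill H0 a0) (efill H1 a1)"
  unfolding exposes_nonval_leaf_def using exposes_leaf_efill by blast

lemma exposes_nonval_leaf_in_ectx:
  "(p0, p1) \<in> P \<Longrightarrow> \<not> (is_val p0 \<and> is_val p1) \<Longrightarrow> ectx_cl P kH H0 H1 \<Longrightarrow>
    exposes_nonval_leaf P (kH + Suc 0) (efill H0 p0) (efill H1 p1)"
  unfolding exposes_nonval_leaf_def using exposes_leaf_efill[OF exposes_leaf_refl] by blast

lemma exposes_nonval_leaf_top: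
  "(a0, a1) \<in> P \<Longrightarrow> \<not> is_val a0 \<Longrightarrow> exposes_nonval_leaf P (Suc 0) a0 a1"
  unfolding exposes_nonval_leaf_def using exposes_leaf_refl by blast

lemma applies_leaf_efill:
  assumes "applies_leaf P k a0 a1 a0'" and H: "ectx_cl P kH H0 H1"
  shows "applies_leaf P (kH + k) (efill H0 a0) (efill H1 a1) (efill H0 a0')"
proof -
  obtain G0 G1 b0 b1 w0 w1 kG kw where G: "(Lam b0, Lam b1) \<in> P"
    "a0 = efill G0 (App (Lam b0) w0)" "a1 = efill G1 (App (Lam b1) w1)"
    "a0' = efill G0 (subst 0 w0 b0)" "ectx_cl P kG G0 G1" "ctx_cl P kw w0 w1"
    "is_val w0" "is_val w1" "kG + kw < k"
    using assms(1) unfolding applies_leaf_def by blast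
  have "ectx_cl P (kH + kG) (ecomp H0 G0) (ecomp H1 G1)"
    using ectx_cl_ecomp[OF H G(5)] .
  moreover have "efill H0 a0 = efill (ecomp H0 G0) (App (Lam b0) w0)"
    "efill H1 a1 = efill (ecomp H1 G1) (App (Lam b1) w1)"
    "efill H0 a0' = efill (ecomp H0 G0) (subst 0 w0 b0)"
    using G(2-4) by simp_all
  moreover have "kH + kG + kw < kH + k" using G(9) by simp
  ultimately show ?thesis
    unfolding applies_leaf_def using G(1,6-8) by blast
qed

lemma simulated_efill:
  assumes "simulated P k a0 a1 a0'" and H: "ectx_cl P kH H0 H1"
  shows "simulated P (kH + k) (efill H0 a0) (efill H1 a1) (efill H0 a0')"
proof -
  from assms(1) consider (lockstep) a1' j where "sstep a1 a1'" "ctx_cl P j a0' a1'"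
    | (exposed) "exposes_nonval_leaf P k a0 a1" | (applied) "applies_leaf P k a0 a1 a0'"
    unfolding simulated_def by blast
  then show ?thesis
  proof cases
    case lockstep
    then have "sstep (efill H1 a1) (efill H1 a1')"
      "ctx_cl P (kH + j) (efill H0 a0') (efill H1 a1')"
      using ectx_cl_evctx[OF H] sstep_efill ctx_cl_efill[OF H] by auto
    then show ?thesis unfolding simulated_def by blast
  next
    case exposed
    then show ?thesis unfolding simulated_def using exposes_nonval_leaf_efill[OF _ H] by blast
  next
    case applied
    then show ?thesis unfolding simulated_def using applies_leaf_efill[OF _ H] by blast
  qed
qed

lemma simulated_if_exposed: "exposes_nonval_leaf P k a0 a1 \<Longrightarrow> simulated P k a0 a1 a0'"
  unfolding simulated_def by blast

lemma simulated_leaf: "(a0, a1) \<in> P \<Longrightarrow> \<not> is_val a0 \<Longrightarrow> simulated P (Suc 0) a0 a1 a0'"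
  by (rule simulated_if_exposed) (rule exposes_nonval_leaf_top)

lemma ctx_cl_fun_cases:
  assumes "ctx_cl P k1 v c" and "is_val v"
  obtains "is_val c" | "(v, c) \<in> P" "k1 = Suc 0" "\<not> is_val c"
proof -
  from assms(2) obtain b where "v = Lam b" by (auto simp: is_val_def)
  with assms(1) that show ?thesis using ctx_cl_Lam_cases by blast
qed

lemma ctx_cl_pure_shift:
  assumes "pure E" and "ctx_cl P k (efill E (Shift t)) y"
  shows "exposes_nonval_leaf P k (efill E (Shift t)) y
    \<or> (\<exists>E1 t' k1 k2. y = efill E1 (Shift t') \<and> pure E1 \<and> ectx_cl P k1 E E1 \<and> ctx_cl P k2 t t')"
  using assms
proof (induction E arbitrary: k y)
  case EHole
  from EHole(2)[simplified] show ?case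
  proof (cases rule: ctx_cl_ShiftE)
    case leaf then show ?thesis using exposes_nonval_leaf_top by (simp add: is_val_def)
  next
    case (Shift t') then show ?thesis by (intro disjI2 exI[of _ EHole]) (auto intro: ectx_cl.EHole)
  qed
next
  case (EAppR v E')
  then have v: "is_val v" and E': "pure E'" by auto
  from EAppR(3)[simplified] show ?case
  proof (cases rule: ctx_cl_AppE)
    case leaf then show ?thesis using exposes_nonval_leaf_top by (simp add: is_val_def)
  next
    case (App k1 c k2 d)
    from App(3) v show ?thesis
    proof (cases rule: ctx_cl_fun_cases)
      case 1
      have H: "ectx_cl P (k1 + 0) (EAppR v EHole) (EAppR c EHole)"
        using App(3) v 1 by (blast intro: ectx_cl.intros)
      from EAppR.IH[OF E' App(4)] show ?thesis
      proof (elim disjE exE conjE)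
        assume "exposes_nonval_leaf P k2 (efill E' (Shift t)) d"
        then show ?thesis using App exposes_nonval_leaf_efill[OF _ H] by simp
      next
        fix E1 t' j1 j2 assume "d = efill E1 (Shift t')" "pure E1" "ectx_cl P j1 E' E1" "ctx_cl P j2 t t'"
        then show ?thesis using App v 1
          by (intro disjI2 exI[of _ "EAppR c E1"]) (auto intro: ectx_cl.EAppR)
      qed
    next
      case 2
      have "ectx_cl P (0 + k2) (EAppL EHole (efill E' (Shift t))) (EAppL EHole d)"
        using App(4) by (blast intro: ectx_cl.intros)
      from exposes_nonval_leaf_in_ectx[OF 2(1) _ this] show ?thesis
        using App 2 by simp
    qed
  qed
next
  case (EAppL E' u)
  then have E': "pure E'" by simp
  from EAppL(3)[simplified] show ?case
  proof (cases rule: ctx_cl_AppE)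
    case leaf then show ?thesis using exposes_nonval_leaf_top by (simp add: is_val_def)
  next
    case (App k1 c k2 d)
    have H: "ectx_cl P (0 + k2) (EAppL EHole u) (EAppL EHole d)"
      using App(4) by (blast intro: ectx_cl.intros)
    from EAppL.IH[OF E' App(3)] show ?thesis
    proof (elim disjE exE conjE)
      assume "exposes_nonval_leaf P k1 (efill E' (Shift t)) c"
      then show ?thesis using App exposes_nonval_leaf_efill[OF _ H] by (simp add: add.commute)
    next
      fix E1 t' j1 j2 assume "c = efill E1 (Shift t')" "pure E1" "ectx_cl P j1 E' E1" "ctx_cl P j2 t t'"
      then show ?thesis using App
        by (intro disjI2 exI[of _ "EAppL E1 d"]) (auto intro: ectx_cl.EAppL)
    qed
  qed
qed simp

lemma simulated_beta:
  assumes v: "is_val v" and r: "ctx_cl P k (App (Lam t) v) a1" and P: "closed_rel P"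
  shows "simulated P k (App (Lam t) v) a1 (subst 0 v t)"
  using r
proof (cases rule: ctx_cl_AppE)
  case leaf then show ?thesis by (simp add: simulated_leaf is_val_def)
next
  case (App k1 c k2 d)
  have lam: "is_val (Lam t)" by (simp add: is_val_def)
  from App(3) lam show ?thesis
  proof (cases rule: ctx_cl_fun_cases)
    case 1
    from App(4) v show ?thesis
    proof (cases rule: ctx_cl_fun_cases)
      case 1
      from App(3) show ?thesis
      proof (cases rule: ctx_cl_LamE)
        case leaf
        then obtain b1 where "c = Lam b1" using \<open>is_val c\<close> by (auto simp: is_val_def)
        then have "applies_leaf P k (App (Lam t) v) a1 (subst 0 v t)"
          unfolding applies_leaf_def using leaf App v \<open>is_val d\<close>
          by (intro exI[of _ EHole] exI[of _ EHole] exI[of _ t] exI[of _ b1] exI[of _ v] exI[of _ d]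
              exI[of _ 0] exI[of _ k2]) (auto intro: ectx_cl.EHole)
        then show ?thesis unfolding simulated_def by blast
      next
        case (Lam t')
        obtain j where "ctx_cl P j (subst 0 v t) (subst 0 d t')"
          using ctx_cl_subst[OF Lam(2) App(4) P] by blast
        moreover have "sstep a1 (subst 0 d t')" using App Lam \<open>is_val d\<close> by (auto intro: sstep.beta)
        ultimately show ?thesis unfolding simulated_def by blast
      qed
    next
      case 2
      have "ectx_cl P (k1 + 0) (EAppR (Lam t) EHole) (EAppR c EHole)"
        using App(3) lam \<open>is_val c\<close> by (blast intro: ectx_cl.intros)
      from exposes_nonval_leaf_in_ectx[OF 2(1) _ this] show ?thesis
        using App 2 by (simp add: simulated_if_exposed)
    qed
  next
    case 2
    have "ectx_cl P (0 + k2) (EAppL EHole v) (EAppL EHole d)"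
      using App(4) by (blast intro: ectx_cl.intros)
    from exposes_nonval_leaf_in_ectx[OF 2(1) _ this] show ?thesis
      using App 2 by (simp add: simulated_if_exposed add.commute)
  qed
qed

lemma ctx_cl_shift_step:
  assumes "pure E" and "ctx_cl P k (efill E (Shift t)) y" and P: "closed_rel P"
  shows "exposes_nonval_leaf P k (efill E (Shift t)) y \<or>
    (\<exists>y' j. sstep (Reset y) (Reset y') \<and> ctx_cl P j (subst 0 (cont E) t) y')"
proof -
  { fix E1 t' k1 k2 assume E1: "y = efill E1 (Shift t')" "pure E1" "ectx_cl P k1 E E1"
      and t': "ctx_cl P k2 t t'"
    obtain j where "ctx_cl P j (subst 0 (cont E) t) (subst 0 (cont E1) t')"
      using ctx_cl_subst[OF t' ctx_cl_cont[OF E1(3) P] P] by blast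
    moreover have "sstep (Reset y) (Reset (subst 0 (cont E1) t'))"
      using E1 by (auto intro: sstep.shift)
    ultimately have ?thesis by blast }
  then show ?thesis using ctx_cl_pure_shift[OF assms(1,2)] by blast
qed

lemma simulated_shift:
  assumes E: "pure E" and r: "ctx_cl P k (Reset (efill E (Shift t))) a1" and P: "closed_rel P"
  shows "simulated P k (Reset (efill E (Shift t))) a1 (Reset (subst 0 (cont E) t))"
  using r
proof (cases rule: ctx_cl_ResetE)
  case leaf then show ?thesis by (simp add: simulated_leaf is_val_def)
next
  case (Reset y)
  from ctx_cl_shift_step[OF E Reset(2) P] show ?thesis
  proof (elim disjE exE conjE)
    assume "exposes_nonval_leaf P k (efill E (Shift t)) y"
    from exposes_nonval_leaf_efill[OF this ectx_cl.EReset[OF ectx_cl.EHole]] show ?thesis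
      using Reset by (simp add: simulated_if_exposed)
  next
    fix y' j assume "sstep (Reset y) (Reset y')" "ctx_cl P j (subst 0 (cont E) t) y'"
    then show ?thesis unfolding simulated_def using Reset by (blast intro: ctx_cl.Reset)
  qed
qed

lemma simulated_reset:
  assumes v: "is_val v" and r: "ctx_cl P k (Reset v) a1"
  shows "simulated P k (Reset v) a1 v"
  using r
proof (cases rule: ctx_cl_ResetE)
  case leaf then show ?thesis by (simp add: simulated_leaf is_val_def)
next
  case (Reset v')
  from Reset(2) v show ?thesis
  proof (cases rule: ctx_cl_fun_cases)
    case 1
    then show ?thesis unfolding simulated_def using Reset by (blast intro: sstep.reset)
  next
    case 2
    from exposes_nonval_leaf_in_ectx[OF 2(1) _ ectx_cl.EReset[OF ectx_cl.EHole]] show ?thesis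
      using Reset 2 by (simp add: simulated_if_exposed)
  qed
qed

lemma simulated_appL:
  assumes IH: "\<And>k c. ctx_cl P k a c \<Longrightarrow> simulated P k a c a'"
    and r: "ctx_cl P k (App a b) a1"
  shows "simulated P k (App a b) a1 (App a' b)"
  using r
proof (cases rule: ctx_cl_AppE)
  case leaf then show ?thesis by (simp add: simulated_leaf is_val_def)
next
  case (App k1 c k2 d)
  have "ectx_cl P (0 + k2) (EAppL EHole b) (EAppL EHole d)"
    using App(4) by (blast intro: ectx_cl.intros)
  from simulated_efill[OF IH[OF App(3)] this] show ?thesis
    using App by (simp add: add.commute)
qed

lemma simulated_appR:
  assumes a: "is_val a" and IH: "\<And>k d. ctx_cl P k b d \<Longrightarrow> simulated P k b d b'"
    and r: "ctx_cl P k (App a b) a1"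
  shows "simulated P k (App a b) a1 (App a b')"
  using r
proof (cases rule: ctx_cl_AppE)
  case leaf then show ?thesis by (simp add: simulated_leaf is_val_def)
next
  case (App k1 c k2 d)
  from App(3) a show ?thesis
  proof (cases rule: ctx_cl_fun_cases)
    case 1
    have "ectx_cl P (k1 + 0) (EAppR a EHole) (EAppR c EHole)"
      using App(3) a 1 by (blast intro: ectx_cl.intros)
    from simulated_efill[OF IH[OF App(4)] this] show ?thesis
      using App by simp
  next
    case 2
    have "ectx_cl P (0 + k2) (EAppL EHole b) (EAppL EHole d)"
      using App(4) by (blast intro: ectx_cl.intros)
    from exposes_nonval_leaf_in_ectx[OF 2(1) _ this] show ?thesis
      using App 2 by (simp add: simulated_if_exposed add.commute)
  qed
qed

lemma simulated_resetI:
  assumes IH: "\<And>k c. ctx_cl P k a c \<Longrightarrow> simulated P k a c a'"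
    and r: "ctx_cl P k (Reset a) a1"
  shows "simulated P k (Reset a) a1 (Reset a')"
  using r
proof (cases rule: ctx_cl_ResetE)
  case leaf then show ?thesis by (simp add: simulated_leaf is_val_def)
next
  case (Reset c)
  from simulated_efill[OF IH[OF Reset(2)] ectx_cl.EReset[OF ectx_cl.EHole]] show ?thesis
    using Reset by simp
qed

lemma sstep_simulated:
  "sstep a0 a0' \<Longrightarrow> ctx_cl P k a0 a1 \<Longrightarrow> closed_rel P \<Longrightarrow> simulated P k a0 a1 a0'"
proof (induction arbitrary: k a1 rule: sstep.induct)
  case (beta v t) then show ?case by (rule simulated_beta)
next
  case (shift E t) then show ?case by (rule simulated_shift)
next
  case (reset v) then show ?case by (blast intro: simulated_reset)
next
  case (appL a a' b) then show ?case by (blast intro: simulated_appL)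
next
  case (appR a b b') then show ?case by (blast intro: simulated_appR)
next
  case (resetI a a') then show ?case by (blast intro: simulated_resetI)
qed

section \<open>CIU approximation implies contextual approximation\<close>

definition ciu_approx :: "trm \<Rightarrow> trm \<Rightarrow> bool" where
  "ciu_approx t0 t1 = (\<forall>F. evctx F \<longrightarrow> closed_ectx 0 F \<longrightarrow>
     eval_to_val (Reset (efill F t0)) \<longrightarrow> eval_to_val (Reset (efill F t1)))"

lemma applies_leaf_exposes_leaf:
  assumes "applies_leaf P k a0 a1 a0'"
  obtains b0 b1 where "(Lam b0, Lam b1) \<in> P" "exposes_leaf P k (Lam b0) (Lam b1) a0 a1"
proof -
  obtain G0 G1 b0 b1 w0 w1 kG kw where G: "(Lam b0, Lam b1) \<in> P"
    "a0 = efill G0 (App (Lam b0) w0)" "a1 = efill G1 (App (Lam b1) w1)"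
    "ectx_cl P kG G0 G1" "ctx_cl P kw w0 w1" "kG + kw < k"
    using assms unfolding applies_leaf_def by blast
  have "ectx_cl P (kG + (0 + kw)) (ecomp G0 (EAppL EHole w0)) (ecomp G1 (EAppL EHole w1))"
    using ectx_cl_ecomp[OF G(4) ectx_cl.EAppL[OF ectx_cl.EHole G(5)]] .
  from exposes_leaf_efill[OF exposes_leaf_refl this]
  have "exposes_leaf P (kG + (0 + kw) + Suc 0) (Lam b0) (Lam b1) a0 a1"
    using G(2,3) by simp
  then have "exposes_leaf P k (Lam b0) (Lam b1) a0 a1"
    using exposes_leaf_mono G(6) by fastforce
  with G(1) show ?thesis by (rule that)
qed

text \<open>The step of the inner induction: \<open>F1[t0]\<close> has fewer leaves, and CIU approximation turns
  \<open>\<langle>F1[t0]\<rangle>\<close> into \<open>\<langle>F1[t1]\<rangle>\<close>.\<close>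

lemma eval_exposed_leaf:
  assumes ciu: "ciu_approx t0 t1" and "closed t0" and "closed u1"
    and exposed: "exposes_leaf {(t0, t1)} k t0 t1 u0 u1"
    and fewer_leaves: "\<And>m u1'. m < k \<Longrightarrow> closed u1' \<Longrightarrow> ctx_cl {(t0, t1)} m u0 u1' \<Longrightarrow>
      eval_to_val (Reset u1')"
  shows "eval_to_val (Reset u1)"
proof -
  obtain F0 F1 m where F: "u0 = efill F0 t0" "u1 = efill F1 t1" "evctx F1"
    "ctx_cl {(t0, t1)} m u0 (efill F1 t0)" "m < k"
    using exposed unfolding exposes_leaf_def by blast
  have "closed_ectx 0 F1" using \<open>closed u1\<close> F(2) by (simp add: closed_def closed_at_efill)
  moreover have "eval_to_val (Reset (efill F1 t0))"
    using fewer_leaves[OF F(5) _ F(4)] \<open>closed t0\<close> calculation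
    by (simp add: closed_def closed_at_efill)
  ultimately show ?thesis using ciu F(2,3) unfolding ciu_approx_def by blast
qed

lemma eval_Reset_ctx_cl_val:
  assumes ciu: "ciu_approx t0 t1" and r: "ctx_cl {(t0, t1)} k u0 u1" and u0: "is_val u0"
  shows "eval_to_val (Reset u1)"
proof -
  from u0 obtain b where "u0 = Lam b" by (auto simp: is_val_def)
  with r consider "is_val u1" | "u0 = t0" "u1 = t1"
    using ctx_cl_Lam_cases by blast
  then show ?thesis
  proof cases
    case 1
    then show ?thesis by (rule eval_to_val_Reset_val)
  next
    case 2
    then have "eval_to_val (Reset (efill EHole t0))"
      using u0 eval_to_val_Reset_val by simp
    then have "eval_to_val (Reset (efill EHole t1))"
      using ciu unfolding ciu_approx_def by (meson closed_ectx.simps(1) evctx.simps(1))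
    with 2 show ?thesis by simp
  qed
qed

lemma ciu_approx_step:
  assumes ciu: "ciu_approx t0 t1" and t0: "closed t0" and t1: "closed t1"
    and st: "sstep (Reset u0) a'" and u1: "closed u1" and r: "ctx_cl {(t0, t1)} k u0 u1"
    and fewer_leaves: "\<And>m u1'. m < k \<Longrightarrow> closed u1' \<Longrightarrow> ctx_cl {(t0, t1)} m u0 u1' \<Longrightarrow>
      eval_to_val (Reset u1')"
  shows "eval_to_val (Reset u1) \<or>
    (\<exists>u0' u1' j. a' = Reset u0' \<and> sstep (Reset u1) (Reset u1') \<and> ctx_cl {(t0, t1)} j u0' u1')"
proof -
  let ?P = "{(t0, t1)}"
  have P: "closed_rel ?P" using t0 t1 by (simp add: closed_rel_def)
  have leaf_exposed: "eval_to_val (Reset u1)" if "exposes_leaf ?P k t0 t1 u0 u1"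
    using eval_exposed_leaf[OF ciu t0 u1 that fewer_leaves] .
  from st show ?thesis
  proof (cases rule: sstep_ResetD)
    case (shift E t)
    from ctx_cl_shift_step[OF shift(1) r[unfolded shift(2)] P] show ?thesis
      using leaf_exposed shift by (auto simp: exposes_nonval_leaf_def)
  next
    case reset
    then show ?thesis using eval_Reset_ctx_cl_val[OF ciu r] by blast
  next
    case (inner u0')
    from sstep_simulated[OF inner(1) r P] consider
        (lockstep) u1' j where "sstep u1 u1'" "ctx_cl ?P j u0' u1'"
      | (exposed) "exposes_nonval_leaf ?P k u0 u1" | (applied) "applies_leaf ?P k u0 u1 u0'"
      unfolding simulated_def by blast
    then show ?thesis
    proof cases
      case lockstep
      then show ?thesis using inner(2) by (blast intro: sstep.resetI)
    next
      case exposed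
      then show ?thesis using leaf_exposed by (auto simp: exposes_nonval_leaf_def)
    next
      case applied
      then obtain b0 b1 where "(Lam b0, Lam b1) \<in> ?P" "exposes_leaf ?P k (Lam b0) (Lam b1) u0 u1"
        by (rule applies_leaf_exposes_leaf)
      then show ?thesis using leaf_exposed by simp
    qed
  qed
qed

lemma eval_ctx_cl_if_ciu_approx:
  assumes ciu: "ciu_approx t0 t1" and t0: "closed t0" and t1: "closed t1"
  shows "steps a v \<Longrightarrow> is_val v \<Longrightarrow> a = Reset u0 \<Longrightarrow> closed u0 \<Longrightarrow> closed u1 \<Longrightarrow>
    ctx_cl {(t0, t1)} k u0 u1 \<Longrightarrow> eval_to_val (Reset u1)"
proof (induction arbitrary: u0 u1 k rule: converse_rtranclp_induct)
  case base
  then show ?case by (simp add: is_val_def)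
next
  case (step a a')
  have st: "sstep (Reset u0) a'" using step.hyps(1) step.prems(2) by (simp add: step_eq_sstep)
  from step.prems(4,5) show ?case
  proof (induction k arbitrary: u1 rule: less_induct)
    case (less k)
    have "eval_to_val (Reset u1) \<or> (\<exists>u0' u1' j. a' = Reset u0' \<and>
        sstep (Reset u1) (Reset u1') \<and> ctx_cl {(t0, t1)} j u0' u1')"
      using ciu_approx_step[OF ciu t0 t1 st less.prems] less.IH by blast
    then show ?case
    proof (elim disjE exE conjE)
      fix u0' u1' j assume a': "a' = Reset u0'" and st1: "sstep (Reset u1) (Reset u1')"
        and r: "ctx_cl {(t0, t1)} j u0' u1'"
      have "closed u0'" "closed u1'"
        using sstep_closed[OF st] sstep_closed[OF st1] step.prems(3) less.prems(1) a'
        by (auto simp: closed_def)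
      then show ?thesis
        using step.IH[OF step.prems(1) a' _ _ r] eval_to_val_sstep[OF st1] by blast
    qed
  qed
qed

lemma ctx_approx_if_ciu_approx:
  assumes "ciu_approx t0 t1" and "closed t0" and "closed t1"
    and "closed (Reset (cfill C t0))" and "closed (Reset (cfill C t1))"
    and "eval_to_val (Reset (cfill C t0))"
  shows "eval_to_val (Reset (cfill C t1))"
proof -
  obtain v where "steps (Reset (cfill C t0)) v" "is_val v"
    using assms(6) unfolding eval_to_val_def by blast
  moreover obtain k where "ctx_cl {(t0, t1)} k (cfill C t0) (cfill C t1)"
    using ctx_cl_cfill by blast
  ultimately show ?thesis
    using eval_ctx_cl_if_ciu_approx[OF assms(1-3)] assms(4,5) by (simp add: closed_def)
qed

section \<open>Environmental bisimulations imply CIU approximation\<close>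

lemma env_ok_closed_rel: "env_ok E \<Longrightarrow> closed_rel E"
  by (auto simp: env_ok_def closed_rel_def)

lemma hat_ectx_cl: "(G0, G1) \<in> hat E \<Longrightarrow> \<exists>k. ectx_cl E k G0 G1"
proof (induction rule: hat.induct)
  case (appR F0 F1 v0 v1)
  then show ?case
    using tilde_raw_ctx_cl[of v0 v1 E] by (auto simp: tilde_def intro: ectx_cl.EAppR)
next
  case (appL F0 F1 t0 t1)
  then show ?case
    using tilde_raw_ctx_cl[of t0 t1 E] by (auto simp: tilde_def intro: ectx_cl.EAppL)
qed (auto intro: ectx_cl.intros)

lemma hat_closed_ectx: "(G0, G1) \<in> hat E \<Longrightarrow> closed_ectx 0 G0 \<and> closed_ectx 0 G1"
  by (induction rule: hat.induct) (auto simp: tilde_def closed_def)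

lemma hat_evctx: "(G0, G1) \<in> hat E \<Longrightarrow> evctx G0 \<and> evctx G1"
  by (induction rule: hat.induct) auto

lemma ectx_cl_hat:
  "ectx_cl E k G0 G1 \<Longrightarrow> closed_ectx 0 G0 \<Longrightarrow> closed_ectx 0 G1 \<Longrightarrow> (G0, G1) \<in> hat E"
  by (induction rule: ectx_cl.induct)
    (auto intro!: hat.intros ctx_cl_tilde_raw simp: tilde_def closed_def)

lemma hat_mono: "(G0, G1) \<in> hat E \<Longrightarrow> E \<subseteq> E' \<Longrightarrow> (G0, G1) \<in> hat E'"
  using hat_ectx_cl ectx_cl_mono ectx_cl_hat hat_closed_ectx by metis

lemma hat_refl: "evctx G \<Longrightarrow> closed_ectx 0 G \<Longrightarrow> (G, G) \<in> hat E"
  using ectx_cl_hat[OF ectx_cl_refl] by blast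

lemma hat_pure_or_Reset:
  assumes "(G0, G1) \<in> hat E"
  shows "pure G0 \<and> pure G1 \<or>
    (\<exists>H0 H1 E0 E1. (H0, H1) \<in> hat E \<and> (E0, E1) \<in> hat E \<and> pure E0 \<and> pure E1 \<and>
       G0 = ecomp H0 (EReset E0) \<and> G1 = ecomp H1 (EReset E1))"
  using assms
proof (induction rule: hat.induct)
  case (appR F0 F1 v0 v1)
  then show ?case
    by (metis ecomp.simps(2) hat.appR pure.simps(2))
next
  case (appL F0 F1 t0 t1)
  then show ?case
    by (metis ecomp.simps(3) hat.appL pure.simps(3))
next
  case (rst F0 F1)
  then show ?case
    by (metis ecomp.simps(1,4) hat.hole hat.rst)
qed simp

lemma efill_pure_Shift_neq_prog:
  "pure E \<Longrightarrow> evctx G \<Longrightarrow> is_prog p \<Longrightarrow> efill E (Shift t) \<noteq> efill G p"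
proof (induction E arbitrary: G)
  case EHole then show ?case by (cases G) (auto simp: is_prog_def)
next
  case (EAppR v E')
  then show ?case
    by (cases G) (auto simp: is_prog_def efill_Reset_not_val)
next
  case (EAppL E' u)
  then show ?case
    by (cases G) (auto simp: is_prog_def is_val_def dest: efill_eq_Lam)
qed simp

lemma sstep_efill_prog:
  "evctx G \<Longrightarrow> is_prog p \<Longrightarrow> sstep (efill G p) a' \<Longrightarrow> \<exists>p'. sstep p p' \<and> a' = efill G p'"
proof (induction G arbitrary: a')
  case (EAppR v G')
  from EAppR(4) show ?case
    by (cases rule: sstep_AppE)
      (use EAppR efill_Reset_not_val val_no_sstep in \<open>auto simp: is_val_def is_prog_def\<close>)
next
  case (EAppL G' u)
  from EAppL(4) show ?case
    by (cases rule: sstep_AppE)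
      (use EAppL efill_eq_Lam efill_Reset_not_val in \<open>auto simp: is_prog_def is_val_def\<close>)
next
  case (EReset G')
  from EReset(4)[simplified] show ?case
  proof (cases rule: sstep_ResetD)
    case (shift E t)
    then show ?thesis using efill_pure_Shift_neq_prog[of E G' p t] EReset by simp
  next
    case reset
    then show ?thesis using EReset(3) efill_Reset_not_val by (auto simp: is_prog_def)
  next
    case (inner u')
    then show ?thesis using EReset by auto
  qed
qed simp

lemmas env_bisim_p_clauses = env_bisim_p_def[THEN iffD1, THEN conjunct2]

lemma env_bisim_p_env_ok: "env_bisim_p X \<Longrightarrow> E \<in> fst X \<Longrightarrow> env_ok E"
  unfolding env_bisim_p_def envrel_ok_def by (elim conjE) (rule bspec)

lemma env_bisim_p_reset:
  "env_bisim_p X \<Longrightarrow> (E, t0, t1) \<in> snd X \<Longrightarrow> \<not> (is_prog t0 \<and> is_prog t1) \<Longrightarrow>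
    pure E0 \<Longrightarrow> pure E1 \<Longrightarrow> (E0, E1) \<in> hat E \<Longrightarrow>
    (E, Reset (efill E0 t0), Reset (efill E1 t1)) \<in> snd X"
  by (drule env_bisim_p_clauses[THEN conjunct1, rule_format]) blast+

lemmas env_bisim_p_prog = env_bisim_p_clauses[THEN conjunct2, THEN conjunct1, rule_format]

lemma env_bisim_p_prog_step:
  "env_bisim_p X \<Longrightarrow> (E, p0, p1) \<in> snd X \<Longrightarrow> is_prog p0 \<Longrightarrow> is_prog p1 \<Longrightarrow>
    step p0 p0' \<Longrightarrow> is_prog p0' \<Longrightarrow> \<exists>p1'. steps p1 p1' \<and> is_prog p1' \<and> (E, p0', p1') \<in> snd X"
  by (drule (3) env_bisim_p_prog) blast

lemma env_bisim_p_val_step: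
  "env_bisim_p X \<Longrightarrow> (E, p0, p1) \<in> snd X \<Longrightarrow> is_prog p0 \<Longrightarrow> is_prog p1 \<Longrightarrow>
    step p0 v0 \<Longrightarrow> is_val v0 \<Longrightarrow> \<exists>v1. steps p1 v1 \<and> is_val v1 \<and> insert (v0, v1) E \<in> fst X"
  by (drule (3) env_bisim_p_prog) blast

lemma env_bisim_p_apply:
  "env_bisim_p X \<Longrightarrow> E \<in> fst X \<Longrightarrow> (Lam b0, Lam b1) \<in> E \<Longrightarrow> is_val v0 \<Longrightarrow> is_val v1 \<Longrightarrow>
    (v0, v1) \<in> tilde E \<Longrightarrow> (E, subst 0 v0 b0, subst 0 v1 b1) \<in> snd X"
  by (drule env_bisim_p_clauses[THEN conjunct2, THEN conjunct2]) blast

text \<open>The empty environment need not belong to X, although the triple of interest has it.\<close>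

definition admissible_env :: "envrel \<Rightarrow> env \<Rightarrow> bool" where
  "admissible_env X E = (E = {} \<or> E \<in> fst X)"

lemma admissible_env_ok: "env_bisim_p X \<Longrightarrow> admissible_env X E \<Longrightarrow> env_ok E"
  using env_bisim_p_env_ok[of X E] by (auto simp: admissible_env_def env_ok_def)

text \<open>The invariant along the reduction of \<open>\<langle>F[t0]\<rangle>\<close> and \<open>\<langle>F[t1]\<rangle>\<close>.\<close>

definition bisim_config :: "envrel \<Rightarrow> trm \<Rightarrow> trm \<Rightarrow> bool" where
  "bisim_config X a0 a1 =
     ((\<exists>E G0 G1 p0 p1. admissible_env X E \<and> (G0, G1) \<in> hat E \<and> (E, p0, p1) \<in> snd X \<and>
        is_prog p0 \<and> is_prog p1 \<and> a0 = efill G0 p0 \<and> a1 = efill G1 p1) \<or>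
      (\<exists>E k. admissible_env X E \<and> ctx_cl E k a0 a1 \<and> closed a0 \<and> closed a1))"

lemma bisim_config_efill:
  assumes X: "env_bisim_p X" and E: "admissible_env X E" and t: "(E, t0, t1) \<in> snd X"
    and G: "(G0, G1) \<in> hat E" and "\<not> pure G0"
  shows "bisim_config X (efill G0 t0) (efill G1 t1)"
proof (cases "is_prog t0 \<and> is_prog t1")
  case True
  then show ?thesis unfolding bisim_config_def using E G t by blast
next
  case False
  from hat_pure_or_Reset[OF G] \<open>\<not> pure G0\<close> obtain H0 H1 E0 E1 where
    H: "(H0, H1) \<in> hat E" "(E0, E1) \<in> hat E" "pure E0" "pure E1"
    "G0 = ecomp H0 (EReset E0)" "G1 = ecomp H1 (EReset E1)"
    by blast
  have "(E, Reset (efill E0 t0), Reset (efill E1 t1)) \<in> snd X"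
    using env_bisim_p_reset[OF X t False H(3,4,2)] .
  then show ?thesis
    unfolding bisim_config_def using E H(1,5,6)
    by (intro disjI1 exI[of _ E] exI[of _ H0] exI[of _ H1] exI[of _ "Reset (efill E0 t0)"]
        exI[of _ "Reset (efill E1 t1)"]) (simp add: is_prog_def)
qed

lemma bisim_config_prog_step:
  assumes X: "env_bisim_p X" and E: "admissible_env X E" and G: "(G0, G1) \<in> hat E"
    and t: "(E, p0, p1) \<in> snd X" and p0: "is_prog p0" and p1: "is_prog p1"
    and st: "sstep (efill G0 p0) a0'"
  shows "\<exists>a1'. steps (efill G1 p1) a1' \<and> bisim_config X a0' a1'"
proof -
  have ev: "evctx G0" "evctx G1" using hat_evctx[OF G] by auto
  obtain p0' where st0: "sstep p0 p0'" and a0': "a0' = efill G0 p0'"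
    using sstep_efill_prog[OF ev(1) p0 st] by blast
  from sstep_prog[OF st0 p0] show ?thesis
  proof
    assume "is_prog p0'"
    moreover obtain p1' where "steps p1 p1'" "is_prog p1'" "(E, p0', p1') \<in> snd X"
      using env_bisim_p_prog_step[OF X t p0 p1 _ \<open>is_prog p0'\<close>] st0 by (auto simp: step_eq_sstep)
    ultimately show ?thesis
      unfolding bisim_config_def using E G a0' steps_efill[OF _ ev(2)] by blast
  next
    assume "is_val p0'"
    then obtain v1 where v1: "steps p1 v1" "is_val v1" and E': "insert (p0', v1) E \<in> fst X"
      using env_bisim_p_val_step[OF X t p0 p1] st0 by (auto simp: step_eq_sstep)
    let ?E = "insert (p0', v1) E"
    obtain kG where "ectx_cl ?E kG G0 G1" using hat_ectx_cl hat_mono[OF G] by blast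
    then have "ctx_cl ?E (kG + Suc 0) (efill G0 p0') (efill G1 v1)"
      using ctx_cl_efill ctx_cl.leaf by blast
    moreover have "closed (efill G0 p0')" "closed (efill G1 v1)"
      using hat_closed_ectx[OF G] env_bisim_p_env_ok[OF X E']
      by (auto simp: closed_def closed_at_efill env_ok_def)
    moreover have "admissible_env X ?E" using E' by (simp add: admissible_env_def)
    ultimately have "bisim_config X a0' (efill G1 v1)"
      unfolding bisim_config_def a0' by blast
    then show ?thesis using steps_efill[OF v1(1) ev(2)] by blast
  qed
qed

lemma pure_efill_App_not_prog: "pure G \<Longrightarrow> \<not> is_prog (efill G (App a b))"
  by (cases G) (auto simp: is_prog_def)

lemma bisim_config_cl_step:
  assumes X: "env_bisim_p X" and E: "admissible_env X E" and r: "ctx_cl E k a0 a1"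
    and c0: "closed a0" and c1: "closed a1" and prog: "is_prog a0" and st: "sstep a0 a0'"
  shows "\<exists>a1'. steps a1 a1' \<and> bisim_config X a0' a1'"
proof -
  have ok: "env_ok E" using admissible_env_ok[OF X E] .
  from sstep_simulated[OF st r env_ok_closed_rel[OF ok]] consider
      (lockstep) a1' j where "sstep a1 a1'" "ctx_cl E j a0' a1'"
    | (exposed) "exposes_nonval_leaf E k a0 a1"
    | (applied) "applies_leaf E k a0 a1 a0'"
    unfolding simulated_def by blast
  then show ?thesis
  proof cases
    case lockstep
    have "closed a0'" "closed a1'" using sstep_closed st lockstep(1) c0 c1 by blast+
    then have "bisim_config X a0' a1'"
      unfolding bisim_config_def using E lockstep(2) by blast
    then show ?thesis using lockstep(1) by (auto simp: step_eq_sstep)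
  next
    case exposed
    then show ?thesis using ok by (auto simp: exposes_nonval_leaf_def env_ok_def)
  next
    case applied
    then obtain G0 G1 b0 b1 w0 w1 kG kw where l: "(Lam b0, Lam b1) \<in> E"
      and a: "a0 = efill G0 (App (Lam b0) w0)" "a1 = efill G1 (App (Lam b1) w1)"
        "a0' = efill G0 (subst 0 w0 b0)"
      and G: "ectx_cl E kG G0 G1" and w: "ctx_cl E kw w0 w1" "is_val w0" "is_val w1"
      unfolding applies_leaf_def by blast
    have "E \<in> fst X" using E l by (auto simp: admissible_env_def)
    moreover have cl: "closed_ectx 0 G0" "closed_ectx 0 G1" "closed w0" "closed w1"
      using c0 c1 a(1,2) by (auto simp: closed_def closed_at_efill)
    ultimately have t: "(E, subst 0 w0 b0, subst 0 w1 b1) \<in> snd X"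
      using env_bisim_p_apply[OF X _ l w(2,3)] ctx_cl_tilde_raw[OF w(1)] by (simp add: tilde_def)
    have "\<not> pure G0" using prog a(1) pure_efill_App_not_prog by blast
    then have "bisim_config X a0' (efill G1 (subst 0 w1 b1))"
      using bisim_config_efill[OF X E t ectx_cl_hat[OF G cl(1,2)]] a(3) by simp
    moreover have "sstep a1 (efill G1 (subst 0 w1 b1))"
      using sstep_efill[OF _ sstep.beta[OF w(3)]] ectx_cl_evctx[OF G] a(2) by blast
    ultimately show ?thesis by (auto simp: step_eq_sstep)
  qed
qed

lemma bisim_config_step:
  assumes "env_bisim_p X" and "bisim_config X a0 a1" and "is_prog a0" and "sstep a0 a0'"
  shows "\<exists>a1'. steps a1 a1' \<and> bisim_config X a0' a1'"
proof -
  from assms(2) consider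
      (prog) E G0 G1 p0 p1 where "admissible_env X E" "(G0, G1) \<in> hat E" "(E, p0, p1) \<in> snd X"
        "is_prog p0" "is_prog p1" "a0 = efill G0 p0" "a1 = efill G1 p1"
    | (cl) E k where "admissible_env X E" "ctx_cl E k a0 a1" "closed a0" "closed a1"
    unfolding bisim_config_def by blast
  then show ?thesis
  proof cases
    case prog
    then show ?thesis using bisim_config_prog_step[OF assms(1)] assms(4) by blast
  next
    case cl
    then show ?thesis using bisim_config_cl_step[OF assms(1) _ _ _ _ assms(3,4)] by blast
  qed
qed

lemma bisim_config_val:
  assumes X: "env_bisim_p X" and c: "bisim_config X v a1" and v: "is_val v"
  shows "is_val a1"
proof -
  from v obtain b where b: "v = Lam b" by (auto simp: is_val_def)
  have "\<not> (is_prog p \<and> v = efill G p)" for G p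
    using v efill_Reset_not_val by (auto simp: is_prog_def)
  with c obtain E k where "admissible_env X E" "ctx_cl E k v a1"
    unfolding bisim_config_def by blast
  then show ?thesis
    using ctx_cl_Lam_cases[of E k b a1] admissible_env_ok[OF X] b by (auto simp: env_ok_def)
qed

lemma eval_if_bisim_config:
  assumes X: "env_bisim_p X"
  shows "steps a0 v \<Longrightarrow> is_val v \<Longrightarrow> bisim_config X a0 a1 \<Longrightarrow> is_prog a0 \<or> is_val a0 \<Longrightarrow>
    eval_to_val a1"
proof (induction arbitrary: a1 rule: converse_rtranclp_induct)
  case base
  then show ?case using bisim_config_val[OF X] eval_to_val_val by blast
next
  case (step a0 a0')
  then have st: "sstep a0 a0'" by (simp add: step_eq_sstep)
  then have "is_prog a0" using step.prems(3) val_no_sstep by blast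
  then obtain a1' where "steps a1 a1'" "bisim_config X a0' a1'"
    using bisim_config_step[OF X step.prems(2) _ st] by blast
  then show ?case
    using step.IH[OF step.prems(1)] sstep_prog[OF st \<open>is_prog a0\<close>] eval_to_val_steps by blast
qed

lemma ciu_approx_if_env_bisim_p:
  assumes X: "env_bisim_p X" and t: "({}, t0, t1) \<in> snd X"
  shows "ciu_approx t0 t1"
  unfolding ciu_approx_def
proof (intro allI impI)
  fix F assume F: "evctx F" "closed_ectx 0 F" and "eval_to_val (Reset (efill F t0))"
  then obtain v where "steps (Reset (efill F t0)) v" "is_val v" unfolding eval_to_val_def by blast
  moreover have "bisim_config X (efill (EReset F) t0) (efill (EReset F) t1)"
    using bisim_config_efill[OF X _ t hat_refl[of "EReset F"]] F by (simp add: admissible_env_def)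
  ultimately show "eval_to_val (Reset (efill F t1))"
    using eval_if_bisim_config[OF X] by (simp add: is_prog_def)
qed

section \<open>Symmetry\<close>

definition converse_envrel :: "envrel \<Rightarrow> envrel" where
  "converse_envrel X = (converse ` fst X, (\<lambda>(E, a, b). (E\<inverse>, b, a)) ` snd X)"

lemma fst_converse_envrel [simp]: "E \<in> fst (converse_envrel X) \<longleftrightarrow> E\<inverse> \<in> fst X"
  unfolding converse_envrel_def by (force intro: image_eqI[where x = "E\<inverse>"])

lemma snd_converse_envrel [simp]: "(E, a, b) \<in> snd (converse_envrel X) \<longleftrightarrow> (E\<inverse>, b, a) \<in> snd X"
  unfolding converse_envrel_def by (force intro: image_eqI[where x = "(E\<inverse>, b, a)"])

lemma tilde_raw_converse: "(a, b) \<in> tilde_raw R \<Longrightarrow> (b, a) \<in> tilde_raw (R\<inverse>)"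
  by (induction rule: tilde_raw.induct[split_format(complete)]) (auto intro: tilde_raw.intros)

lemma tilde_converse: "(a, b) \<in> tilde R \<Longrightarrow> (b, a) \<in> tilde (R\<inverse>)"
  using tilde_raw_converse by (auto simp: tilde_def)

lemma hat_converse: "(F0, F1) \<in> hat R \<Longrightarrow> (F1, F0) \<in> hat (R\<inverse>)"
  by (induction rule: hat.induct) (auto intro: hat.intros tilde_converse)

lemma env_bisim_p_converse:
  assumes X: "env_bisim_p X"
  shows "env_bisim_p (converse_envrel X)"
  unfolding env_bisim_p_def
proof (intro conjI allI impI ballI)
  have "(insert (v0, v1) E)\<inverse> = insert (v1, v0) (E\<inverse>)" for v0 v1 and E :: env
    by auto
  then have insert_converse:
    "insert (v0, v1) E \<in> fst (converse_envrel X) \<longleftrightarrow> insert (v1, v0) (E\<inverse>) \<in> fst X"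
    for v0 v1 E by simp
  show "envrel_ok (converse_envrel X)"
    using X unfolding env_bisim_p_def envrel_ok_def converse_envrel_def env_ok_def by auto
  show "(E, Reset (efill E0 t0), Reset (efill E1 t1)) \<in> snd (converse_envrel X)"
    if "(E, t0, t1) \<in> snd (converse_envrel X)" "\<not> (is_prog t0 \<and> is_prog t1)"
      "pure E0" "pure E1" "(E0, E1) \<in> hat E" for E t0 t1 E0 E1
    using that env_bisim_p_reset[OF X] hat_converse by auto
  fix E p0 p1
  assume "(E, p0, p1) \<in> snd (converse_envrel X)" "is_prog p0" "is_prog p1"
  then have mirrored: "(E\<inverse>, p1, p0) \<in> snd X" "is_prog p1" "is_prog p0" by simp_all
  note bisim = env_bisim_p_prog[OF X mirrored]
  show "\<exists>p1'. steps p1 p1' \<and> is_prog p1' \<and> (E, p0', p1') \<in> snd (converse_envrel X)"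
    if "step p0 p0'" "is_prog p0'" for p0'
    using bisim that by auto
  show "\<exists>v1. steps p1 v1 \<and> is_val v1 \<and> insert (v0, v1) E \<in> fst (converse_envrel X)"
    if "step p0 v0" "is_val v0" for v0
    using bisim that insert_converse by auto
  show "\<exists>p0'. steps p0 p0' \<and> is_prog p0' \<and> (E, p0', p1') \<in> snd (converse_envrel X)"
    if "step p1 p1'" "is_prog p1'" for p1'
    using bisim that by auto
  show "\<exists>v0. steps p0 v0 \<and> is_val v0 \<and> insert (v0, v1) E \<in> fst (converse_envrel X)"
    if "step p1 v1" "is_val v1" for v1
    using bisim that insert_converse by auto
next
  fix E b0 b1 v0 v1
  assume "E \<in> fst (converse_envrel X)" "(Lam b0, Lam b1) \<in> E" "is_val v0" "is_val v1"
    "(v0, v1) \<in> tilde E"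
  then show "(E, subst 0 v0 b0, subst 0 v1 b1) \<in> snd (converse_envrel X)"
    using env_bisim_p_apply[OF X] tilde_converse by simp
qed

theorem corollary2:
  assumes "closed t0" and "closed t1"
    and "env_bisimilar_p {} t0 t1"
  shows "ctx_equiv_p t0 t1"
proof -
  from assms(3) obtain X where X: "env_bisim_p X" and t: "({}, t0, t1) \<in> snd X"
    unfolding env_bisimilar_p_def by blast
  have "ciu_approx t0 t1" using ciu_approx_if_env_bisim_p[OF X t] .
  moreover have "ciu_approx t1 t0"
    using ciu_approx_if_env_bisim_p[OF env_bisim_p_converse[OF X]] t by simp
  ultimately show ?thesis
    unfolding ctx_equiv_p_def using ctx_approx_if_ciu_approx assms(1,2) by blast
qed

end
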